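(* Let $C_6=\langle a\mid a^6=e\rangle$ and $\Delta=\{a,a^{-1},a^2,a^{-2}\}$ (so $C_\Delta(C_6)$ is the Johnson graph $J(4,2)$). Then $W=W_{a}U_{a}+W_{a^{-1}}U_{a^{-1}}+W_{a^2}U_{a^2}+W_{a^{-2}}U_{a^{-2}}$ is a homogeneous scalar quantum walk on $C_\Delta(C_6)$ if and only if, up to a global phase, $W_a=\tfrac12e^{i\phi}$, $W_{a^{-1}}=\tfrac12$, $W_{a^2}=\tfrac{(-1)^q}{2}$, $W_{a^{-2}}=\tfrac{(-1)^{q+1}}{2}e^{i\phi}$ for some real $\phi$ and some integer $q$.
   Context: The Cayley graph $C_\Delta(\Gamma)$ has vertex set $\Gamma$ and directed edges $(g,g\delta)$, $g\in\Gamma,\delta\in\Delta$. Let $\ell^2(\Gamma)$ have orthonormal basis $\{|g\rangle\}_{g\in\Gamma}$ and for $\delta\in\Gamma$ let $U_\delta|g\rangle=|g\delta\rangle$. A homogeneous scalar quantum walk on $C_\Delta(\Gamma)$ is a unitary operator $W=\sum_{\delta\in\Delta}W_\delta U_\delta$ with all complex coefficients $W_\delta$ nonzero. "Up to a global phase" means that all coefficients may be multiplied by a common complex number of modulus one. The Johnson graph $J(n,k)$ has as vertices the $k$-element subsets of an $n$-element set, two subsets being adjacent when they share $k-1$ elements. *)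

theory Defs
  imports "HOL-Analysis.Analysis" "HOL-Library.Numeral_Type"
begin

text \<open>The cyclic group C_6 is modelled by the numeral type 6 (integers mod 6, written
additively); the generator a is 1, a^k is k, a^{-1} is -1.  The Hilbert space l^2(C_6)
is complex^6, with |g> the g-th standard basis vector; operators are complex^6^6 matrices
(column g is the image of |g>).\<close>

definition shift_op :: "6 \<Rightarrow> complex^6^6" where
  "shift_op d = (\<chi> h g. if h = g + d then 1 else 0)"

definition walk_op :: "6 set \<Rightarrow> (6 \<Rightarrow> complex) \<Rightarrow> complex^6^6" where
  "walk_op D W = (\<chi> h g. \<Sum>d\<in>D. W d * (shift_op d $ h $ g))"

definition adjoint_mat :: "complex^6^6 \<Rightarrow> complex^6^6" where
  "adjoint_mat M = (\<chi> i j. cnj (M $ j $ i))"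

definition unitary_mat :: "complex^6^6 \<Rightarrow> bool" where
  "unitary_mat M \<longleftrightarrow> adjoint_mat M ** M = mat 1 \<and> M ** adjoint_mat M = mat 1"

definition homogeneous_scalar_qw :: "6 set \<Rightarrow> (6 \<Rightarrow> complex) \<Rightarrow> bool" where
  "homogeneous_scalar_qw D W \<longleftrightarrow> (\<forall>d\<in>D. W d \<noteq> 0) \<and> unitary_mat (walk_op D W)"

end

theory Submission
  imports Defs
begin

text \<open>Since W is a linear combination of translations of the abelian group C_6, both
W^* W and W W^* are the circulant matrix of the autocorrelation s \<mapsto> \<Sum>_t conj(w_t) w_{t+s}
of the coefficient function w, so W is unitary iff this autocorrelation is the indicator
of 0. The autocorrelation at -s is the conjugate of the one at s, so for \<Delta> = {\<plusminus>1, \<plusminus>2}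
this leaves four quadratic equations in W_a, W_{a^{-1}}, W_{a^2}, W_{a^{-2}}. The
equations at shifts 1 and 2 combine to W_a^2 = W_{a^{-2}}^2, hence W_{a^{-2}} = v W_a and
W_{a^2} = -v W_{a^{-1}} with v = \<plusminus>1; the equation at shift 3 then forces
|W_a| = |W_{a^{-1}}|, and the one at shift 0 makes both moduli 1/2. Taking the phase of
2 W_{a^{-1}} as the global phase yields the stated form.\<close>

lemma UNIV_6: "(UNIV :: 6 set) = {-2, -1, 0, 1, 2, 3}"
proof -
  have "x \<in> {-2, -1, 0, 1, 2, 3}" for x :: 6
  proof (induct x)
    case (of_int z)
    then have "z \<in> {0, 1, 2, 3, 4, 5}" by fastforce
    then show ?case by auto
  qed
  then show ?thesis by blast
qed

lemma sum_UNIV_6: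
  fixes f :: "6 \<Rightarrow> 'a::comm_monoid_add"
  shows "(\<Sum>t\<in>UNIV. f t) = f (-2) + f (-1) + f 0 + f 1 + f 2 + f 3"
  unfolding UNIV_6 by (simp add: add.assoc)

lemma all_6: "(\<forall>s::6. P s) \<longleftrightarrow> P (-2) \<and> P (-1) \<and> P 0 \<and> P 1 \<and> P 2 \<and> P 3"
  by (metis UNIV_6 UNIV_I insertE singletonD)

lemma sum_UNIV_translate:
  fixes f :: "'a::group_add \<Rightarrow> 'b::comm_monoid_add"
  shows "(\<Sum>t\<in>UNIV. f (t + i)) = (\<Sum>t\<in>UNIV. f t)"
  by (rule sum.reindex_bij_witness[of _ "\<lambda>t. t - i" "\<lambda>t. t + i"]) auto

definition walk_coeff :: "'a set \<Rightarrow> ('a \<Rightarrow> 'b::zero) \<Rightarrow> 'a \<Rightarrow> 'b" where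
  "walk_coeff D W d = (if d \<in> D then W d else 0)"

definition autocorr :: "('a::{finite,ab_group_add} \<Rightarrow> complex) \<Rightarrow> 'a \<Rightarrow> complex" where
  "autocorr w s = (\<Sum>t\<in>UNIV. cnj (w t) * w (t + s))"

lemma autocorr_uminus: "autocorr w (- s) = cnj (autocorr w s)"
proof -
  have "autocorr w (- s) = (\<Sum>t\<in>UNIV. cnj (w (t + s)) * w (t + s - s))"
    using sum_UNIV_translate[of "\<lambda>t. cnj (w t) * w (t - s)" s] by (simp add: autocorr_def)
  also have "\<dots> = cnj (autocorr w s)"
    by (simp add: autocorr_def mult.commute)
  finally show ?thesis .
qed

lemma walk_op_entry: "walk_op D W $ h $ g = walk_coeff D W (h - g)"
proof -
  have "walk_op D W $ h $ g = (\<Sum>d\<in>D. if d = h - g then W d else 0)"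
    unfolding walk_op_def shift_op_def by (auto intro!: sum.cong simp: algebra_simps)
  then show ?thesis
    by (simp add: walk_coeff_def)
qed

lemma adjoint_walk_op_mult_walk_op:
  "(adjoint_mat (walk_op D W) ** walk_op D W) $ i $ j = autocorr (walk_coeff D W) (i - j)"
proof -
  have "(adjoint_mat (walk_op D W) ** walk_op D W) $ i $ j
      = (\<Sum>k\<in>UNIV. cnj (walk_coeff D W (k - i)) * walk_coeff D W (k - j))"
    by (simp add: matrix_matrix_mult_def adjoint_mat_def walk_op_entry)
  also have "\<dots> = (\<Sum>t\<in>UNIV. cnj (walk_coeff D W (t + i - i)) * walk_coeff D W (t + i - j))"
    by (rule sum_UNIV_translate[symmetric])
  finally show ?thesis
    by (simp add: autocorr_def algebra_simps)
qed

lemma walk_op_mult_adjoint_walk_op: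
  "(walk_op D W ** adjoint_mat (walk_op D W)) $ i $ j = autocorr (walk_coeff D W) (i - j)"
proof -
  have "(walk_op D W ** adjoint_mat (walk_op D W)) $ i $ j
      = (\<Sum>k\<in>UNIV. walk_coeff D W (i - k) * cnj (walk_coeff D W (j - k)))"
    by (simp add: matrix_matrix_mult_def adjoint_mat_def walk_op_entry)
  also have "\<dots> = (\<Sum>t\<in>UNIV. walk_coeff D W (i - (j - t)) * cnj (walk_coeff D W (j - (j - t))))"
    by (rule sum.reindex_bij_witness[of _ "\<lambda>k. j - k" "\<lambda>t. j - t"]) auto
  finally show ?thesis
    by (simp add: autocorr_def algebra_simps)
qed

lemma unitary_walk_op_iff:
  "unitary_mat (walk_op D W) \<longleftrightarrow> (\<forall>s. autocorr (walk_coeff D W) s = (if s = 0 then 1 else 0))"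
proof
  assume "unitary_mat (walk_op D W)"
  then have "(adjoint_mat (walk_op D W) ** walk_op D W) $ s $ 0 = mat 1 $ s $ 0" for s
    by (simp add: unitary_mat_def)
  then show "\<forall>s. autocorr (walk_coeff D W) s = (if s = 0 then 1 else 0)"
    by (simp add: adjoint_walk_op_mult_walk_op mat_def)
next
  assume delta: "\<forall>s. autocorr (walk_coeff D W) s = (if s = 0 then 1 else 0)"
  show "unitary_mat (walk_op D W)"
    by (auto simp: unitary_mat_def vec_eq_iff mat_def delta
        adjoint_walk_op_mult_walk_op walk_op_mult_adjoint_walk_op)
qed

lemma unitary_walk_op_iff_autocorr_0123:
  "unitary_mat (walk_op D W) \<longleftrightarrow>
    autocorr (walk_coeff D W) 0 = 1 \<and> autocorr (walk_coeff D W) 1 = 0 \<and>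
    autocorr (walk_coeff D W) 2 = 0 \<and> autocorr (walk_coeff D W) 3 = 0"
  unfolding unitary_walk_op_iff all_6 by (auto simp: autocorr_uminus)

lemma numeral_wrap_6: "(4::6) = -2" "(5::6) = -1"
  by simp_all

lemma autocorr_walk_coeff_J42:
  fixes W :: "6 \<Rightarrow> complex"
  defines "w \<equiv> walk_coeff {1, -1, 2, -2} W"
  shows "autocorr w 0 = cnj (W 1) * W 1 + cnj (W (-1)) * W (-1) + cnj (W 2) * W 2 + cnj (W (-2)) * W (-2)"
    and "autocorr w 1 = cnj (W 1) * W 2 + cnj (W (-2)) * W (-1)"
    and "autocorr w 2 = cnj (W (-1)) * W 1 + cnj (W 2) * W (-2)"
    and "autocorr w 3 = cnj (W (-2)) * W 1 + cnj (W (-1)) * W 2 + cnj (W 1) * W (-2) + cnj (W 2) * W (-1)"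
  unfolding autocorr_def sum_UNIV_6 w_def walk_coeff_def
  by (simp_all add: numeral_wrap_6 algebra_simps)

lemma homogeneous_scalar_qw_J42_iff:
  "homogeneous_scalar_qw {1, -1, 2, -2} W \<longleftrightarrow>
    W 1 \<noteq> 0 \<and> W (-1) \<noteq> 0 \<and> W 2 \<noteq> 0 \<and> W (-2) \<noteq> 0 \<and>
    cnj (W 1) * W 1 + cnj (W (-1)) * W (-1) + cnj (W 2) * W 2 + cnj (W (-2)) * W (-2) = 1 \<and>
    cnj (W 1) * W 2 + cnj (W (-2)) * W (-1) = 0 \<and>
    cnj (W (-1)) * W 1 + cnj (W 2) * W (-2) = 0 \<and>
    cnj (W (-2)) * W 1 + cnj (W (-1)) * W 2 + cnj (W 1) * W (-2) + cnj (W 2) * W (-1) = 0"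
  unfolding homogeneous_scalar_qw_def unitary_walk_op_iff_autocorr_0123 autocorr_walk_coeff_J42
  by auto

lemma exists_phase_if_norm_eq:
  fixes a b :: complex
  assumes "cmod a = cmod b" and "b \<noteq> 0"
  obtains \<phi> :: real where "a = b * exp (\<i> * of_real \<phi>)"
proof
  have "cmod (a / b) = 1"
    using assms by (simp add: norm_divide)
  then show "a = b * exp (\<i> * of_real (Arg2pi (a / b)))"
    using assms(2) by (simp add: complex_norm_eq_1_exp)
qed

lemma J42_equations_imp_sign_pattern:
  fixes a b c e :: complex
  assumes "a \<noteq> 0" and "b \<noteq> 0"
    and eq0: "cnj a * a + cnj b * b + cnj c * c + cnj e * e = 1"
    and eq1: "cnj a * c + cnj e * b = 0"
    and eq2: "cnj b * a + cnj c * e = 0"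
    and eq3: "cnj e * a + cnj b * c + cnj a * e + cnj c * b = 0"
  obtains v :: complex where "v = 1 \<or> v = -1" and "e = v * a" and "c = - v * b"
    and "cmod a = 1 / 2" and "cmod b = 1 / 2"
proof -
  have eq1_cnj: "a * cnj c + e * cnj b = 0"
    using arg_cong[OF eq1, of cnj] by simp
  have "cnj b * (a * a - e * e) = a * (cnj b * a + cnj c * e) - e * (a * cnj c + e * cnj b)"
    by (simp add: algebra_simps)
  with eq1_cnj eq2 \<open>b \<noteq> 0\<close> have "a * a = e * e"
    by simp
  then obtain v :: complex where v: "v = 1 \<or> v = -1" and e: "e = v * a"
    by (metis square_eq_iff mult_1 mult_minus1)
  have "cnj a * (c + v * b) = 0"
    using eq1 v unfolding e by (auto simp: algebra_simps)
  with \<open>a \<noteq> 0\<close> have c: "c = - v * b"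
    by (simp add: eq_neg_iff_add_eq_0)
  define A B where "A = (cmod a)\<^sup>2" and "B = (cmod b)\<^sup>2"
  have A: "cnj a * a = of_real A" and B: "cnj b * b = of_real B"
    unfolding A_def B_def by (metis complex_norm_square mult.commute)+
  have "cnj e * a + cnj b * c + cnj a * e + cnj c * b = 2 * v * (cnj a * a - cnj b * b)"
    using v unfolding e c by (auto simp: algebra_simps)
  with eq3 v have "A = B"
    unfolding A B by auto
  moreover have "cnj a * a + cnj b * b + cnj c * c + cnj e * e = 2 * (cnj a * a + cnj b * b)"
    using v unfolding e c by (auto simp: algebra_simps)
  with eq0 have "2 * (A + B) = 1"
    unfolding A B by (metis of_real_1 of_real_add of_real_eq_iff of_real_mult of_real_numeral)
  ultimately have "(cmod a)\<^sup>2 = (1 / 2)\<^sup>2" and "(cmod b)\<^sup>2 = (1 / 2)\<^sup>2"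
    unfolding A_def B_def by (simp_all add: power2_eq_square)
  then have "cmod a = 1 / 2" and "cmod b = 1 / 2"
    by simp_all
  with v e c show ?thesis
    using that by blast
qed

lemma J42_equations_iff_phase_form:
  fixes a b c e :: complex
  shows "(a \<noteq> 0 \<and> b \<noteq> 0 \<and> c \<noteq> 0 \<and> e \<noteq> 0 \<and>
      cnj a * a + cnj b * b + cnj c * c + cnj e * e = 1 \<and>
      cnj a * c + cnj e * b = 0 \<and>
      cnj b * a + cnj c * e = 0 \<and>
      cnj e * a + cnj b * c + cnj a * e + cnj c * b = 0) \<longleftrightarrow>
    (\<exists>z. cmod z = 1 \<and> (\<exists>(\<phi>::real) (q::int).
       a = z * (exp (\<i> * of_real \<phi>) / 2) \<and>
       b = z * (1 / 2) \<and>
       c = z * ((-1) powi q / 2) \<and>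
       e = z * ((-1) powi (q + 1) / 2 * exp (\<i> * of_real \<phi>))))"
  (is "?equations \<longleftrightarrow> ?phase_form")
proof
  assume ?equations
  then obtain v where v: "v = 1 \<or> v = -1" and e: "e = v * a" and c: "c = - v * b"
    and "cmod a = 1 / 2" and "cmod b = 1 / 2" and "b \<noteq> 0"
    using J42_equations_imp_sign_pattern[of a b c e] by blast
  then obtain \<phi> where a: "a = b * exp (\<i> * of_real \<phi>)"
    using exists_phase_if_norm_eq by metis
  define q :: int where "q = (if v = 1 then 1 else 0)"
  have "(-1) powi q = - v" and "(-1) powi (q + 1) = v"
    using v by (auto simp: q_def)
  then have "a = 2 * b * (exp (\<i> * of_real \<phi>) / 2) \<and> b = 2 * b * (1 / 2) \<and>
      c = 2 * b * ((-1) powi q / 2) \<and> e = 2 * b * ((-1) powi (q + 1) / 2 * exp (\<i> * of_real \<phi>))"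
    unfolding a c e by simp
  moreover have "cmod (2 * b) = 1"
    using \<open>cmod b = 1 / 2\<close> by (simp add: norm_mult)
  ultimately show ?phase_form
    by blast
next
  assume ?phase_form
  then obtain z \<phi> q where "cmod z = 1"
    and a: "a = z * (exp (\<i> * of_real \<phi>) / 2)" and b: "b = z * (1 / 2)"
    and c: "c = z * ((-1) powi q / 2)" and e: "e = z * ((-1) powi (q + 1) / 2 * exp (\<i> * of_real \<phi>))"
    by blast
  have cnj_z: "cnj z = 1 / z" and "z \<noteq> 0"
    using \<open>cmod z = 1\<close> divide_conv_cnj[of z 1] by auto
  have cnj_E: "cnj (exp (\<i> * of_real \<phi>)) = 1 / exp (\<i> * of_real \<phi>)"
    by (simp add: exp_cnj exp_minus inverse_eq_divide)
  have sign: "(-1::complex) powi (q + 1) = - ((-1) powi q)"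
    by (simp add: power_int_add_1)
  have "(-1::complex) powi q = 1 \<or> (-1::complex) powi q = -1"
    by (cases "even q") (auto simp: power_int_minus_left)
  then show ?equations
    using cnj_z cnj_E \<open>z \<noteq> 0\<close> unfolding a b c e sign by (auto simp: field_simps)
qed

theorem mainTheorem11:
  fixes W :: "6 \<Rightarrow> complex"
  shows "homogeneous_scalar_qw {1, -1, 2, -2} W \<longleftrightarrow>
    (\<exists>z::complex. cmod z = 1 \<and> (\<exists>(\<phi>::real) (q::int).
       W 1 = z * (exp (\<i> * of_real \<phi>) / 2) \<and>
       W (-1) = z * (1 / 2) \<and>
       W 2 = z * ((-1) powi q / 2) \<and>
       W (-2) = z * ((-1) powi (q + 1) / 2 * exp (\<i> * of_real \<phi>))))"
  unfolding homogeneous_scalar_qw_J42_iff by (rule J42_equations_iff_phase_form)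

end
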